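(* Let $X:\mathbb{N}\to\mathbf{Set}_*$ be a tower of pointed sets, $A$ an abelian group, $m\ge2$ an integer, $h\in G(X,A)$, and $x_1,\dots,x_l\in\lim_\mathbb{N}X$. Suppose that for every $n\in\mathbb{N}$ and every $a\in\mathrm{supp}(h(n))\setminus\{x_1(n),\dots,x_l(n)\}$ we have $h(n)_a\in mA$. Then $[h]\in mH(X,A)$.
   Context: $\mathbb{N}$ is regarded as a category with a single morphism $n\to m$ whenever $n\ge m$. For a pointed set $Y$, $Y\wedge A:=\bigoplus_{Y\setminus\{*\}}A$, whose elements are finitely supported pointed maps $y:Y\to A$, $s\mapsto y_s$, with $\mathrm{supp}(y)=\{s:y_s\ne0\}$; functorial via $f_*(sv)=f(s)v$, where $sv$ is the element with value $v$ at $s$ ($*v=0$). $G(X,A):=\lim_\mathbb{N}(X\wedge A)$; $K(X,A)$ is the image of the injective natural map $\rho:(\lim_\mathbb{N}X)\wedge A\to G(X,A)$, $\rho(xv)(n)=x(n)v$; $H(X,A):=G(X,A)/K(X,A)$, and $[h]$ denotes the class of $h\in G(X,A)$ in $H(X,A)$. *)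

theory Defs
  imports Main
begin

text \<open>A tower of pointed sets X : N -> Set_*: pointed sets (X n, pt n) and pointed
  maps f n : X (Suc n) -> X n (the morphism n+1 -> n of N; all other morphisms are composites).\<close>
definition tower :: "(nat \<Rightarrow> 'a set) \<Rightarrow> (nat \<Rightarrow> 'a) \<Rightarrow> (nat \<Rightarrow> 'a \<Rightarrow> 'a) \<Rightarrow> bool" where
  "tower X pt f \<longleftrightarrow> (\<forall>n. pt n \<in> X n \<and> (\<forall>x \<in> X (Suc n). f n x \<in> X n) \<and> f n (pt (Suc n)) = pt n)"

definition limT :: "(nat \<Rightarrow> 'a set) \<Rightarrow> (nat \<Rightarrow> 'a \<Rightarrow> 'a) \<Rightarrow> (nat \<Rightarrow> 'a) set" where
  "limT X f = {x. \<forall>n. x n \<in> X n \<and> f n (x (Suc n)) = x n}"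

definition supp :: "('c \<Rightarrow> 'b::zero) \<Rightarrow> 'c set" where
  "supp y = {s. y s \<noteq> 0}"

text \<open>Y \<and> A: finitely supported pointed maps Y -> A (value 0 at the base point p and
  outside Y).\<close>
definition smash :: "'c set \<Rightarrow> 'c \<Rightarrow> ('c \<Rightarrow> 'b::zero) set" where
  "smash Y p = {y. (\<forall>s. s \<notin> Y - {p} \<longrightarrow> y s = 0) \<and> finite (supp y)}"

text \<open>Functoriality f_* : Y \<and> A -> Z \<and> A, f_*(s v) = f(s) v, extended additively.\<close>
definition push :: "('c \<Rightarrow> 'd) \<Rightarrow> 'd set \<Rightarrow> 'd \<Rightarrow> ('c \<Rightarrow> 'b::comm_monoid_add) \<Rightarrow> ('d \<Rightarrow> 'b)" where
  "push g Z q y = (\<lambda>t. if t \<in> Z - {q} then (\<Sum>s\<in>{s \<in> supp y. g s = t}. y s) else 0)"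

definition GXA :: "(nat \<Rightarrow> 'a set) \<Rightarrow> (nat \<Rightarrow> 'a) \<Rightarrow> (nat \<Rightarrow> 'a \<Rightarrow> 'a) \<Rightarrow> (nat \<Rightarrow> 'a \<Rightarrow> 'b::ab_group_add) set" where
  "GXA X pt f = {h. \<forall>n. h n \<in> smash (X n) (pt n) \<and> push (f n) (X n) (pt n) (h (Suc n)) = h n}"

text \<open>rho : (lim X) \<and> A -> G(X,A), rho(x v)(n) = x(n) v, extended additively.\<close>
definition rho :: "(nat \<Rightarrow> 'a set) \<Rightarrow> (nat \<Rightarrow> 'a) \<Rightarrow> ((nat \<Rightarrow> 'a) \<Rightarrow> 'b::ab_group_add) \<Rightarrow> (nat \<Rightarrow> 'a \<Rightarrow> 'b)" where
  "rho X pt y = (\<lambda>n a. if a \<in> X n - {pt n} then (\<Sum>x\<in>{x \<in> supp y. x n = a}. y x) else 0)"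

definition KXA :: "(nat \<Rightarrow> 'a set) \<Rightarrow> (nat \<Rightarrow> 'a) \<Rightarrow> (nat \<Rightarrow> 'a \<Rightarrow> 'a) \<Rightarrow> (nat \<Rightarrow> 'a \<Rightarrow> 'b::ab_group_add) set" where
  "KXA X pt f = rho X pt ` smash (limT X f) pt"

definition nsm :: "nat \<Rightarrow> 'b::comm_monoid_add \<Rightarrow> 'b" where
  "nsm m v = (\<Sum>i<m. v)"

text \<open>[h] \<in> m H(X,A) with H = G/K: some g \<in> G with h - m g \<in> K.\<close>
definition in_mH :: "(nat \<Rightarrow> 'a set) \<Rightarrow> (nat \<Rightarrow> 'a) \<Rightarrow> (nat \<Rightarrow> 'a \<Rightarrow> 'a) \<Rightarrow> nat \<Rightarrow> (nat \<Rightarrow> 'a \<Rightarrow> 'b::ab_group_add) \<Rightarrow> bool" where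
  "in_mH X pt f m h \<longleftrightarrow> (\<exists>g \<in> GXA X pt f. (\<lambda>n a. h n a - nsm m (g n a)) \<in> KXA X pt f)"

end

theory Submission
  imports Defs
begin

text \<open>Choose a level \<open>N\<close> beyond which the threads \<open>x\<^sub>i\<close> are pairwise distinct and distinct from the
  base point, and subtract from \<open>h\<close> the image under \<open>\<rho>\<close> of the element of \<open>(lim X) \<and> A\<close> carrying
  \<open>h(N)(x\<^sub>i(N))\<close> at \<open>x\<^sub>i\<close>. The difference \<open>k\<close> lies in \<open>G(X,A)\<close> and takes all its values in \<open>mA\<close>:
  above \<open>N\<close>, the value of \<open>h\<close> along a thread changes from one level to the next only by the
  contributions of the other preimages, which lie in \<open>mA\<close> by hypothesis; below \<open>N\<close>, because
  pushforward preserves \<open>mA\<close>. Finally an element of \<open>G(X,A)\<close> with values in \<open>mA\<close> is \<open>m\<close> times an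
  element of \<open>G(X,A)\<close>: choose \<open>m\<close>-th roots level by level and repair the \<open>m\<close>-torsion defect
  between consecutive levels by lifting it along a section of the structure map.\<close>

definition multiples :: "nat \<Rightarrow> 'b::comm_monoid_add set" where
  "multiples m = range (nsm m)"

lemma nsm_add: "nsm m (a + b) = nsm m a + nsm m (b::'b::comm_monoid_add)"
  by (simp add: nsm_def sum.distrib)

lemma nsm_diff: "nsm m (a - b) = nsm m a - nsm m (b::'b::ab_group_add)"
  by (simp add: nsm_def sum_subtractf)

lemma nsm_0 [simp]: "nsm m (0::'b::comm_monoid_add) = 0"
  by (simp add: nsm_def)

lemma nsm_sum: "nsm m (\<Sum>x\<in>A. g x) = (\<Sum>x\<in>A. nsm m (g x::'b::comm_monoid_add))"
  by (simp add: nsm_def sum.swap[of _ A])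

lemma zero_in_multiples [simp]: "0 \<in> multiples m"
  unfolding multiples_def by (metis nsm_0 rangeI)

lemma add_in_multiples: "a \<in> multiples m \<Longrightarrow> b \<in> multiples m \<Longrightarrow> a + b \<in> multiples m"
  unfolding multiples_def by (auto simp flip: nsm_add)

lemma diff_in_multiples:
  "a \<in> multiples m \<Longrightarrow> b \<in> multiples m \<Longrightarrow> a - (b::'b::ab_group_add) \<in> multiples m"
  unfolding multiples_def by (auto simp flip: nsm_diff)

lemma sum_in_multiples: "(\<And>x. x \<in> A \<Longrightarrow> g x \<in> multiples m) \<Longrightarrow> (\<Sum>x\<in>A. g x) \<in> multiples m"
  by (induction A rule: infinite_finite_induct) (auto intro: add_in_multiples)

lemma nsm_root:
  assumes "\<And>a. k a \<in> multiples m"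
  obtains r where "\<And>a. nsm m (r a) = k a" "supp r \<subseteq> supp k"
proof
  define r where "r a = (if k a = 0 then 0 else inv (nsm m) (k a))" for a
  show "nsm m (r a) = k a" for a
    using assms[of a] by (simp add: r_def multiples_def f_inv_into_f)
  show "supp r \<subseteq> supp k"
    by (auto simp: r_def supp_def)
qed

lemma supp_add: "supp (\<lambda>a. u a + v a) \<subseteq> supp u \<union> supp (v::'c \<Rightarrow> 'b::monoid_add)"
  by (auto simp: supp_def)

lemma supp_diff: "supp (\<lambda>a. u a - v a) \<subseteq> supp u \<union> supp (v::'c \<Rightarrow> 'b::group_add)"
  by (auto simp: supp_def)

lemma smash_iff: "y \<in> smash Y p \<longleftrightarrow> finite (supp y) \<and> supp y \<subseteq> Y - {p}"
  by (auto simp: smash_def supp_def)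

lemma GXA_iff:
  "h \<in> GXA X pt f \<longleftrightarrow>
    (\<forall>n. finite (supp (h n)) \<and> supp (h n) \<subseteq> X n - {pt n} \<and>
         push (f n) (X n) (pt n) (h (Suc n)) = h n)"
  by (auto simp: GXA_def smash_iff)

lemma push_conv_sum:
  assumes "finite S" "supp y \<subseteq> S"
  shows "push g Z q y t = (if t \<in> Z - {q} then (\<Sum>s\<in>{s\<in>S. g s = t}. y s) else 0)"
  unfolding push_def
  by (rule if_cong[OF refl _ refl], rule sum.mono_neutral_left) (use assms in \<open>auto simp: supp_def\<close>)

lemma supp_push: "supp (push g Z q y) \<subseteq> (Z - {q}) \<inter> g ` supp y"
proof
  fix t assume "t \<in> supp (push g Z q y)"
  then have "t \<in> Z - {q}" and "(\<Sum>s\<in>{s \<in> supp y. g s = t}. y s) \<noteq> 0"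
    by (auto simp: supp_def push_def split: if_splits)
  then show "t \<in> (Z - {q}) \<inter> g ` supp y"
    by (metis (mono_tags, lifting) IntI empty_Collect_eq image_eqI sum.empty)
qed

lemma push_add:
  fixes y z :: "'c \<Rightarrow> 'b::comm_monoid_add"
  assumes "finite (supp y)" "finite (supp z)"
  shows "push g Z q (\<lambda>s. y s + z s) t = push g Z q y t + push g Z q z t"
  using assms supp_add[of y z]
  by (simp add: push_conv_sum[of "supp y \<union> supp z"] sum.distrib)

lemma push_diff:
  fixes y z :: "'c \<Rightarrow> 'b::ab_group_add"
  assumes "finite (supp y)" "finite (supp z)"
  shows "push g Z q (\<lambda>s. y s - z s) t = push g Z q y t - push g Z q z t"
  using assms supp_diff[of y z]
  by (simp add: push_conv_sum[of "supp y \<union> supp z"] sum_subtractf)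

lemma push_nsm:
  assumes "finite (supp y)"
  shows "push g Z q (\<lambda>s. nsm m (y s)) t = nsm m (push g Z q y t)"
proof -
  have "supp (\<lambda>s. nsm m (y s)) \<subseteq> supp y" by (auto simp: supp_def)
  with assms show ?thesis
    by (simp add: push_conv_sum[of "supp y"] nsm_sum)
qed

lemma push_section:
  assumes fin: "finite (supp d)" and sub: "supp d \<subseteq> (Z - {q}) \<inter> g ` T"
  obtains e where "supp e \<subseteq> T" "push g Z q e = d" "\<And>t. e t = 0 \<or> e t = d (g t)"
proof -
  have "\<forall>a\<in>supp d. \<exists>t. t \<in> T \<and> g t = a" using sub by blast
  then obtain L where L: "\<And>a. a \<in> supp d \<Longrightarrow> L a \<in> T \<and> g (L a) = a"
    using bchoice by metis
  define e where "e t = (if t \<in> L ` supp d then d (g t) else 0)" for t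
  have supp_e: "supp e \<subseteq> L ` supp d" by (auto simp: e_def supp_def)
  show ?thesis
  proof (rule that)
    show "supp e \<subseteq> T" using supp_e L by blast
    show "e t = 0 \<or> e t = d (g t)" for t by (simp add: e_def)
    show "push g Z q e = d"
    proof
      fix a
      show "push g Z q e a = d a"
      proof (cases "a \<in> Z - {q}")
        case False
        then have "a \<notin> supp d" using sub by blast
        then show ?thesis unfolding push_def if_not_P[OF False] by (simp add: supp_def)
      next
        case True
        have fibre: "{s \<in> L ` supp d. g s = a} = (if a \<in> supp d then {L a} else {})"
          using L by force
        have "push g Z q e a = (\<Sum>s\<in>{s \<in> L ` supp d. g s = a}. e s)"
          using push_conv_sum[OF _ supp_e, of g Z q a] fin True by simp
        also have "\<dots> = d a"
          unfolding fibre using L by (auto simp: e_def supp_def)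
        finally show ?thesis .
      qed
    qed
  qed
qed

text \<open>Any root \<open>s\<close> of \<open>k\<close> pushes to a root of the pushforward that differs from \<open>r\<close> by
  \<open>m\<close>-torsion; this defect is lifted along a section of \<open>g\<close> and added to \<open>s\<close>.\<close>

lemma push_nsm_root_lift:
  fixes k :: "'c \<Rightarrow> 'b::ab_group_add"
  assumes fin: "finite (supp k)" and k_mult: "\<And>t. k t \<in> multiples m"
    and r_root: "\<And>a. nsm m (r a) = push g Z q k a" and r_supp: "supp r \<subseteq> supp (push g Z q k)"
  obtains r' where "supp r' \<subseteq> supp k" "\<And>t. nsm m (r' t) = k t" "push g Z q r' = r"
proof -
  obtain s where s_root: "\<And>t. nsm m (s t) = k t" and s_supp: "supp s \<subseteq> supp k"
    using nsm_root k_mult by blast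
  have fin_s: "finite (supp s)" using fin s_supp finite_subset by blast
  define d where "d a = r a - push g Z q s a" for a
  have d_torsion: "nsm m (d a) = 0" for a
    using push_nsm[OF fin_s, of g Z q m a] by (simp add: d_def nsm_diff r_root s_root)
  have "supp d \<subseteq> supp (push g Z q k) \<union> supp (push g Z q s)"
    using supp_diff[of r "push g Z q s"] r_supp unfolding d_def by blast
  also have "\<dots> \<subseteq> (Z - {q}) \<inter> g ` supp k"
    using supp_push[of g Z q k] supp_push[of g Z q s] s_supp by blast
  finally have d_supp: "supp d \<subseteq> (Z - {q}) \<inter> g ` supp k" .
  then have "finite (supp d)" using fin finite_subset by blast
  then obtain e where e_supp: "supp e \<subseteq> supp k" and e_push: "push g Z q e = d"
    and e_val: "\<And>t. e t = 0 \<or> e t = d (g t)"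
    using push_section[OF _ d_supp] by metis
  have fin_e: "finite (supp e)" using fin e_supp finite_subset by blast
  show ?thesis
  proof
    show "supp (\<lambda>t. s t + e t) \<subseteq> supp k"
      using supp_add[of s e] s_supp e_supp by blast
    show "nsm m (s t + e t) = k t" for t
      using e_val[of t] d_torsion by (auto simp: nsm_add s_root)
    show "push g Z q (\<lambda>t. s t + e t) = r"
    proof
      fix a
      have "push g Z q (\<lambda>t. s t + e t) a = push g Z q s a + d a"
        using push_add[OF fin_s fin_e, of g Z q a] e_push by simp
      then show "push g Z q (\<lambda>t. s t + e t) a = r a" by (simp add: d_def)
    qed
  qed
qed

lemma GXA_nsm_root:
  assumes k: "k \<in> GXA X pt f" and k_mult: "\<And>n a. k n a \<in> multiples m"
  obtains g where "g \<in> GXA X pt f" "\<And>n a. nsm m (g n a) = k n a"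
proof -
  let ?root = "\<lambda>n r. supp r \<subseteq> supp (k n) \<and> (\<forall>a. nsm m (r a) = k n a)"
  let ?lift = "\<lambda>n r r'. ?root (Suc n) r' \<and> push (f n) (X n) (pt n) r' = r"
  have k_level: "finite (supp (k n))" "supp (k n) \<subseteq> X n - {pt n}"
    "push (f n) (X n) (pt n) (k (Suc n)) = k n" for n
    using k by (auto simp: GXA_iff)
  have lift: "\<exists>r'. ?lift n r r'" if "?root n r" for n r
  proof -
    have "\<And>a. nsm m (r a) = push (f n) (X n) (pt n) (k (Suc n)) a"
      "supp r \<subseteq> supp (push (f n) (X n) (pt n) (k (Suc n)))"
      using that k_level(3)[of n] by auto
    then obtain r' where "supp r' \<subseteq> supp (k (Suc n))" "\<And>t. nsm m (r' t) = k (Suc n) t"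
      "push (f n) (X n) (pt n) r' = r"
      using push_nsm_root_lift[of "k (Suc n)" m r "f n" "X n" "pt n", OF k_level(1) k_mult] by blast
    then show ?thesis by blast
  qed
  obtain r0 where r0: "\<And>a. nsm m (r0 a) = k 0 a" "supp r0 \<subseteq> supp (k 0)"
    using nsm_root[of "k 0" m] k_mult by blast
  define g where "g = rec_nat r0 (\<lambda>n r. SOME r'. ?lift n r r')"
  have root: "?root n (g n)" for n
  proof (induction n)
    case 0 show ?case using r0 by (simp add: g_def)
  next
    case (Suc n) with someI_ex[OF lift] show ?case by (simp add: g_def)
  qed
  have "push (f n) (X n) (pt n) (g (Suc n)) = g n" for n
    using someI_ex[OF lift[OF root[of n]]] by (simp add: g_def)
  moreover have "finite (supp (g n))" "supp (g n) \<subseteq> X n - {pt n}" for n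
    using root[of n] k_level[of n] finite_subset by blast+
  ultimately have "g \<in> GXA X pt f" by (simp add: GXA_iff)
  with root show ?thesis using that by blast
qed

lemma GXA_multiples_down:
  assumes "h \<in> GXA X pt f" "\<And>a. h (Suc n) a \<in> multiples m"
  shows "h n a \<in> multiples m"
proof -
  have "h n a = push (f n) (X n) (pt n) (h (Suc n)) a" using assms(1) by (simp add: GXA_iff)
  also have "\<dots> \<in> multiples m"
    unfolding push_def using assms(2) by (auto intro: sum_in_multiples)
  finally show ?thesis .
qed

lemma GXA_multiples_if_eventually:
  assumes "h \<in> GXA X pt f" "\<And>n a. N \<le> n \<Longrightarrow> h n a \<in> multiples m"
  shows "h n a \<in> multiples m"
proof (cases "N \<le> n")
  case False
  then have "n \<le> N" by simp
  then have "\<forall>a. h n a \<in> multiples m"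
  proof (induction n rule: inc_induct)
    case base then show ?case using assms(2) by blast
  next
    case (step n) then show ?case using GXA_multiples_down[OF assms(1)] by blast
  qed
  then show ?thesis ..
qed (use assms(2) in blast)

lemma tower_pt_in_limT: "tower X pt f \<Longrightarrow> pt \<in> limT X f"
  by (auto simp: tower_def limT_def)

lemma limT_neq_mono:
  assumes "x \<in> limT X f" "z \<in> limT X f" "x n \<noteq> z n" "n \<le> k"
  shows "x k \<noteq> z k"
  using assms(4)
proof (induction k rule: dec_induct)
  case base then show ?case using assms(3) .
next
  case (step k)
  have "f k (x (Suc k)) = x k" "f k (z (Suc k)) = z k" using assms(1,2) by (auto simp: limT_def)
  then show ?case using step.IH by metis
qed

lemma eventually_inj_on_limT:
  assumes "finite S" "S \<subseteq> limT X f"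
  obtains N where "\<And>n. N \<le> n \<Longrightarrow> inj_on (\<lambda>x. x n) S"
proof -
  have "eventually (\<lambda>n. x \<noteq> z \<longrightarrow> x n \<noteq> z n) sequentially" if "x \<in> S" "z \<in> S" for x z
  proof (cases "x = z")
    case False
    then obtain i where "x i \<noteq> z i" by (meson ext)
    then show ?thesis
      unfolding eventually_sequentially using limT_neq_mono assms(2) that by blast
  qed simp
  then have "eventually (\<lambda>n. \<forall>x\<in>S. \<forall>z\<in>S. x \<noteq> z \<longrightarrow> x n \<noteq> z n) sequentially"
    using assms(1) by (simp add: eventually_ball_finite)
  then show ?thesis
    using that unfolding eventually_sequentially inj_on_def by blast
qed

lemma supp_rho: "supp (rho X pt y n) \<subseteq> (X n - {pt n}) \<inter> (\<lambda>x. x n) ` supp y"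
proof
  fix a assume "a \<in> supp (rho X pt y n)"
  then have "a \<in> X n - {pt n}" and "(\<Sum>x\<in>{x \<in> supp y. x n = a}. y x) \<noteq> 0"
    by (auto simp: supp_def rho_def split: if_splits)
  then show "a \<in> (X n - {pt n}) \<inter> (\<lambda>x. x n) ` supp y"
    by (metis (mono_tags, lifting) IntI empty_Collect_eq image_eqI sum.empty)
qed

lemma rho_conv_sum:
  assumes "finite S" "supp y \<subseteq> S"
  shows "rho X pt y n a = (if a \<in> X n - {pt n} then (\<Sum>x\<in>{x\<in>S. x n = a}. y x) else 0)"
  unfolding rho_def
  by (rule if_cong[OF refl _ refl], rule sum.mono_neutral_left) (use assms in \<open>auto simp: supp_def\<close>)

lemma rho_at_inj:
  assumes "finite S" "supp y \<subseteq> S" "inj_on (\<lambda>x. x n) S" "x \<in> S" "x n \<in> X n - {pt n}"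
  shows "rho X pt y n (x n) = y x"
proof -
  have "{z \<in> S. z n = x n} = {x}" using assms(3,4) by (auto dest: inj_onD)
  then show ?thesis using rho_conv_sum[OF assms(1,2)] assms(5) by simp
qed

lemma push_rho:
  assumes tw: "tower X pt f" and fin: "finite (supp y)" and lim: "supp y \<subseteq> limT X f"
  shows "push (f n) (X n) (pt n) (rho X pt y (Suc n)) t = rho X pt y n t"
proof (cases "t \<in> X n - {pt n}")
  case False
  then show ?thesis by (auto simp: push_def rho_def)
next
  case True
  let ?S = "(\<lambda>x. x (Suc n)) ` supp y"
  have compat: "f n (x (Suc n)) = x n" "x (Suc n) \<in> X (Suc n)" if "x \<in> supp y" for x
    using that lim by (auto simp: limT_def)
  have rho_Suc: "rho X pt y (Suc n) s = (\<Sum>x\<in>{x \<in> {x \<in> supp y. x n = t}. x (Suc n) = s}. y x)"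
    if "s \<in> {s \<in> ?S. f n s = t}" for s
  proof -
    have "s \<in> X (Suc n) - {pt (Suc n)}"
      using that compat True tw by (auto simp: tower_def)
    moreover have "{x \<in> supp y. x (Suc n) = s} = {x \<in> {x \<in> supp y. x n = t}. x (Suc n) = s}"
      using that compat(1) by auto metis
    ultimately show ?thesis by (simp add: rho_def)
  qed
  have "supp (rho X pt y (Suc n)) \<subseteq> ?S" using supp_rho[of X pt y "Suc n"] by blast
  then have "push (f n) (X n) (pt n) (rho X pt y (Suc n)) t
      = (\<Sum>s\<in>{s \<in> ?S. f n s = t}. rho X pt y (Suc n) s)"
    using push_conv_sum[of ?S "rho X pt y (Suc n)" "f n" "X n" "pt n" t] fin True by simp
  also have "\<dots> = (\<Sum>s\<in>{s \<in> ?S. f n s = t}. \<Sum>x\<in>{x \<in> {x \<in> supp y. x n = t}. x (Suc n) = s}. y x)"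
    using rho_Suc by (rule sum.cong[OF refl])
  also have "\<dots> = (\<Sum>x\<in>{x \<in> supp y. x n = t}. y x)"
  proof (rule sum.group)
    show "finite {x \<in> supp y. x n = t}" "finite {s \<in> ?S. f n s = t}" using fin by simp_all
    show "(\<lambda>x. x (Suc n)) ` {x \<in> supp y. x n = t} \<subseteq> {s \<in> ?S. f n s = t}"
      using compat by auto
  qed
  also have "\<dots> = rho X pt y n t" using True by (simp add: rho_def)
  finally show ?thesis .
qed

lemma rho_in_GXA:
  assumes "tower X pt f" "finite (supp y)" "supp y \<subseteq> limT X f"
  shows "rho X pt y \<in> GXA X pt f"
  unfolding GXA_iff
proof (intro allI conjI)
  fix n
  show "finite (supp (rho X pt y n))"
    by (rule finite_subset[OF supp_rho]) (simp add: assms(2))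
  show "supp (rho X pt y n) \<subseteq> X n - {pt n}" using supp_rho[of X pt y n] by blast
  show "push (f n) (X n) (pt n) (rho X pt y (Suc n)) = rho X pt y n"
    by (rule ext) (rule push_rho[OF assms])
qed

lemma GXA_diff:
  assumes "g \<in> GXA X pt f" "h \<in> GXA X pt f"
  shows "(\<lambda>n a. g n a - h n a) \<in> GXA X pt f"
  unfolding GXA_iff
proof (intro allI conjI)
  fix n
  have fin: "finite (supp (g k))" "finite (supp (h k))"
    and supp: "supp (g k) \<subseteq> X k - {pt k}" "supp (h k) \<subseteq> X k - {pt k}"
    and push: "push (f k) (X k) (pt k) (g (Suc k)) = g k" "push (f k) (X k) (pt k) (h (Suc k)) = h k"
    for k using assms by (auto simp: GXA_iff)
  show "finite (supp (\<lambda>a. g n a - h n a))"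
    using supp_diff[of "g n" "h n"] fin finite_subset by blast
  show "supp (\<lambda>a. g n a - h n a) \<subseteq> X n - {pt n}"
    using supp_diff[of "g n" "h n"] supp by blast
  show "push (f n) (X n) (pt n) (\<lambda>a. g (Suc n) a - h (Suc n) a) = (\<lambda>a. g n a - h n a)"
    by (rule ext) (simp add: push_diff[OF fin[of "Suc n"]] push)
qed

lemma GXA_thread_step:
  assumes h: "h \<in> GXA X pt f" and x: "x \<in> limT X f" "x n \<noteq> pt n"
  shows "h n (x n) = h (Suc n) (x (Suc n))
    + (\<Sum>s\<in>{s \<in> supp (h (Suc n)). f n s = x n \<and> s \<noteq> x (Suc n)}. h (Suc n) s)"
proof -
  let ?S = "insert (x (Suc n)) (supp (h (Suc n)))"
  have fin: "finite (supp (h (Suc n)))" and push_h: "push (f n) (X n) (pt n) (h (Suc n)) = h n"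
    using h by (auto simp: GXA_iff)
  have "x n \<in> X n" and thread: "f n (x (Suc n)) = x n" using x by (auto simp: limT_def)
  have "h n (x n) = push (f n) (X n) (pt n) (h (Suc n)) (x n)" using push_h by simp
  also have "\<dots> = (\<Sum>s\<in>{s \<in> ?S. f n s = x n}. h (Suc n) s)"
    using push_conv_sum[of ?S "h (Suc n)" "f n" "X n" "pt n" "x n"] fin \<open>x n \<in> X n\<close> x(2)
    by auto
  also have "\<dots> = h (Suc n) (x (Suc n)) + (\<Sum>s\<in>{s \<in> ?S. f n s = x n} - {x (Suc n)}. h (Suc n) s)"
    by (rule sum.remove) (use fin thread in auto)
  also have "{s \<in> ?S. f n s = x n} - {x (Suc n)}
      = {s \<in> supp (h (Suc n)). f n s = x n \<and> s \<noteq> x (Suc n)}"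
    by auto
  finally show ?thesis .
qed

lemma GXA_thread_multiples:
  assumes h: "h \<in> GXA X pt f" and S: "S \<subseteq> limT X f" "pt \<in> S"
    and inj: "\<And>n. N \<le> n \<Longrightarrow> inj_on (\<lambda>x. x n) S"
    and hyp: "\<And>n a. a \<in> supp (h n) \<Longrightarrow> a \<notin> (\<lambda>x. x n) ` S \<Longrightarrow> h n a \<in> multiples m"
    and x: "x \<in> S" "x \<noteq> pt" and "N \<le> n"
  shows "h n (x n) - h N (x N) \<in> multiples m"
  using \<open>N \<le> n\<close>
proof (induction n rule: dec_induct)
  case base then show ?case by simp
next
  case (step n)
  have other: "s \<notin> (\<lambda>z. z (Suc n)) ` S" if "f n s = x n" "s \<noteq> x (Suc n)" for s
  proof
    assume "s \<in> (\<lambda>z. z (Suc n)) ` S"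
    then obtain z where z: "z \<in> S" "s = z (Suc n)" by blast
    then have "z n = x n" using that S(1) by (auto simp: limT_def)
    then have "z = x" using inj[OF step.hyps(1)] z(1) x(1) by (auto dest: inj_onD)
    then show False using z that by simp
  qed
  have "x n \<noteq> pt n" using inj[OF step.hyps(1)] x S(2) by (auto dest: inj_onD)
  moreover have "x \<in> limT X f" using S(1) x(1) by blast
  ultimately have "h n (x n) - h (Suc n) (x (Suc n))
      = (\<Sum>s\<in>{s \<in> supp (h (Suc n)). f n s = x n \<and> s \<noteq> x (Suc n)}. h (Suc n) s)"
    using GXA_thread_step[OF h] by (simp add: algebra_simps)
  also have "\<dots> \<in> multiples m"
    using hyp other by (auto intro: sum_in_multiples)
  finally have "(h n (x n) - h N (x N)) - (h n (x n) - h (Suc n) (x (Suc n))) \<in> multiples m"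
    using diff_in_multiples[OF step.IH] by blast
  then show ?case by (simp add: algebra_simps)
qed

lemma GXA_minus_rho_multiples:
  assumes h: "h \<in> GXA X pt f" and S: "finite S" "S \<subseteq> limT X f" "pt \<in> S"
    and inj: "\<And>n. N \<le> n \<Longrightarrow> inj_on (\<lambda>x. x n) S"
    and hyp: "\<And>n a. a \<in> supp (h n) \<Longrightarrow> a \<notin> (\<lambda>x. x n) ` S \<Longrightarrow> h n a \<in> multiples m"
    and "N \<le> n"
  shows "h n a - rho X pt (\<lambda>x. if x \<in> S - {pt} then h N (x N) else 0) n a \<in> multiples m"
    (is "_ - rho X pt ?y n a \<in> _")
proof -
  have supp_y: "supp ?y \<subseteq> S" by (auto simp: supp_def split: if_splits)
  have h_outside: "h n b = 0" if "b \<notin> X n - {pt n}" for b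
    using h that by (auto simp: GXA_iff supp_def)
  have rho_outside: "rho X pt ?y n b = 0" if "b \<notin> (X n - {pt n}) \<inter> (\<lambda>x. x n) ` S" for b
  proof -
    have "b \<notin> supp (rho X pt ?y n)" using supp_rho[of X pt ?y n] supp_y that by blast
    then show ?thesis by (simp add: supp_def)
  qed
  show ?thesis
  proof (cases "a \<in> (\<lambda>x. x n) ` S")
    case True
    then obtain x where x: "x \<in> S" "a = x n" by blast
    show ?thesis
    proof (cases "x = pt")
      case True
      then show ?thesis using x h_outside rho_outside by simp
    next
      case False
      have "x n \<noteq> pt n" using inj[OF \<open>N \<le> n\<close>] x S(3) False by (auto dest: inj_onD)
      moreover have "x n \<in> X n" using x S(2) by (auto simp: limT_def)
      ultimately have "rho X pt ?y n a = h N (x N)"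
        using rho_at_inj[OF S(1) supp_y inj[OF \<open>N \<le> n\<close>] x(1)] x False by simp
      then show ?thesis
        using GXA_thread_multiples[OF h S(2,3) inj hyp x(1) False \<open>N \<le> n\<close>] x by simp
    qed
  next
    case False
    then have "h n a \<in> multiples m"
      using hyp by (cases "h n a = 0") (auto simp: supp_def)
    with False rho_outside show ?thesis by simp
  qed
qed

theorem mainTheorem15:
  fixes X :: "nat \<Rightarrow> 'a set" and pt :: "nat \<Rightarrow> 'a" and f :: "nat \<Rightarrow> 'a \<Rightarrow> 'a"
    and h :: "nat \<Rightarrow> 'a \<Rightarrow> 'b::ab_group_add" and m :: nat
    and xs :: "(nat \<Rightarrow> 'a) list"
  assumes "tower X pt f"
    and "m \<ge> 2"
    and "h \<in> GXA X pt f"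
    and "set xs \<subseteq> limT X f"
    and "\<forall>n. \<forall>a \<in> supp (h n) - (\<lambda>x. x n) ` set xs. \<exists>v. h n a = nsm m v"
  shows "in_mH X pt f m h"
proof -
  define S where "S = insert pt (set xs)"
  have S: "finite S" "S \<subseteq> limT X f" "pt \<in> S"
    using tower_pt_in_limT[OF assms(1)] assms(4) by (auto simp: S_def)
  obtain N where inj: "\<And>n. N \<le> n \<Longrightarrow> inj_on (\<lambda>x. x n) S"
    using eventually_inj_on_limT[OF S(1,2)] by blast
  have hyp: "h n a \<in> multiples m" if a: "a \<in> supp (h n)" "a \<notin> (\<lambda>x. x n) ` S" for n a
  proof -
    have "a \<in> supp (h n) - (\<lambda>x. x n) ` set xs" using a by (auto simp: S_def)
    then obtain v where "h n a = nsm m v" using assms(5) by blast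
    then show ?thesis by (simp add: multiples_def)
  qed
  define y where "y x = (if x \<in> S - {pt} then h N (x N) else 0)" for x
  have y: "y \<in> smash (limT X f) pt"
    using S finite_subset by (fastforce simp: smash_iff y_def supp_def)
  define k where "k n a = h n a - rho X pt y n a" for n a
  have "rho X pt y \<in> GXA X pt f"
    using rho_in_GXA[OF assms(1)] y by (auto simp: smash_iff)
  then have "k \<in> GXA X pt f" unfolding k_def by (rule GXA_diff[OF assms(3)])
  moreover have "k n a \<in> multiples m" if "N \<le> n" for n a
    using GXA_minus_rho_multiples[OF assms(3) S inj hyp that] by (simp add: k_def y_def[abs_def])
  then have "k n a \<in> multiples m" for n a
    by (rule GXA_multiples_if_eventually[OF \<open>k \<in> GXA X pt f\<close>])
  ultimately obtain g where g: "g \<in> GXA X pt f" "\<And>n a. nsm m (g n a) = k n a"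
    using GXA_nsm_root by metis
  have "(\<lambda>n a. h n a - nsm m (g n a)) = rho X pt y" by (simp add: g(2) k_def)
  moreover have "rho X pt y \<in> KXA X pt f" using y by (simp add: KXA_def)
  ultimately have "(\<lambda>n a. h n a - nsm m (g n a)) \<in> KXA X pt f" by simp
  with g(1) show ?thesis unfolding in_mH_def by blast
qed

end
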